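(* Let $R$ be an involutive $K$-algebra and $t$ a canonical, $K$-linear, $R$-valued trace on $L_K(E)$. (1) Let $p,q$ be paths with $\mathbf{r}(p)=\mathbf{r}(q)$, let $r_1,\dots,r_m$ be paths with $\mathbf{s}(r_i)=\mathbf{r}(p)$, and let $a_1,\dots,a_m\in K$. Put $x=\sum_{i=1}^m a_i\,pr_ir_i^*q^*$ and $y=\sum_{i=1}^m a_i\,r_ir_i^*$. Then $t(xx^* )=t(yy^* )$. (2) Suppose further that $t$ satisfies condition (P). Let $v$ be a vertex, let $e_1,\dots,e_m$ be distinct edges in $\mathbf{s}^{-1}(v)$, for each $i$ let $r_{i1},\dots,r_{im_i}$ be paths with $\mathbf{s}(r_{ij})=\mathbf{r}(e_i)$, and let $a,a_{ij}\in K$. Put $x=\sum_{i=1}^m\sum_{j=1}^{m_i}a_{ij}\,e_ir_{ij}r_{ij}^*e_i^*+av$ and $y=\sum_{i=1}^m\sum_{j=1}^{m_i}a_{ij}\,e_ir_{ij}r_{ij}^*e_i^*+a\sum_{i=1}^me_ie_i^*$. Then $t(xx^* )\ge t(yy^* )$ in $R$.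
   Context: A (directed) graph $E=(E^0,E^1,\mathbf{s},\mathbf{r})$ has vertex set $E^0$, edge set $E^1$, source and range maps; no finiteness or countability is assumed. A path is a vertex $v$ (length $0$) or a sequence $p=e_1\cdots e_n$ of edges with $\mathbf{r}(e_i)=\mathbf{s}(e_{i+1})$, $\mathbf{s}(p)=\mathbf{s}(e_1)$, $\mathbf{r}(p)=\mathbf{r}(e_n)$. A vertex $v$ is regular if $\mathbf{s}^{-1}(v)$ is nonempty and finite. $K$ is a field with an arbitrary involution $a\mapsto a^*$. $L_K(E)$ is the free $K$-algebra generated by $E^0\cup E^1\cup\{e^*:e\in E^1\}$ subject to (V) $vw=\delta_{v,w}v$; (E1) $\mathbf{s}(e)e=e\mathbf{r}(e)=e$; (E2) $\mathbf{r}(e)e^*=e^*\mathbf{s}(e)=e^*$; (CK1) $e^*f=\delta_{e,f}\mathbf{r}(e)$; (CK2) $v=\sum_{e\in\mathbf{s}^{-1}(v)}ee^*$ for regular $v$; $p^*=e_n^*\cdots e_1^*$, $v^*=v$, and $L_K(E)$ is involutive via $(\sum a_ip_iq_i^* )^*=\sum a_i^*q_ip_i^*$. An involutive $K$-algebra is a $K$-algebra with an involution ($(xy)^*=y^*x^*$, $x^{**}=x$, additive) satisfying $(ax)^*=a^*x^*$; in it $x\ge0$ means $x$ is a finite sum of elements $zz^*$, and $x\ge y$ means $x-y\ge0$. A trace is an additive map with $t(xy)=t(yx)$; $K$-linear means $t(ax)=at(x)$. A trace on $L_K(E)$ is canonical if $t(pq^* )=\delta_{p,q}t(\mathbf{r}(p))$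 for all paths $p,q$ with $\mathbf{r}(p)=\mathbf{r}(q)$. Condition (P): $t\big(v-\sum_{e\in I}\mathbf{r}(e)\big)\ge0$ for every vertex $v$ and every finite subset $I\subseteq\mathbf{s}^{-1}(v)$ (for $I=\emptyset$ this reads $t(v)\ge0$). *)

theory Defs
  imports Main
begin

text \<open>A graph E is given by types 'v (vertices, E^0 = UNIV) and 'e (edges, E^1 = UNIV)
  together with source and range maps src, rng :: 'e => 'v. No finiteness is assumed.\<close>

text \<open>Generators of the free algebra: vertices, real edges e, and ghost edges e^*.\<close>
datatype ('v, 'e) gen = V 'v | Ed 'e | Gh 'e

text \<open>Elements of the free (non-unital) K-algebra on the generators: finitely supported
  K-valued functions on nonempty words. We use functions on all words and restrict to
  the carrier FA below.\<close>
type_synonym ('v, 'e, 'k) fa = "('v, 'e) gen list \<Rightarrow> 'k"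

definition FA :: "('v, 'e, 'k::zero) fa set" where
  "FA = {f. finite {w. f w \<noteq> 0} \<and> f [] = 0}"

definition fa_word :: "('v, 'e) gen list \<Rightarrow> ('v, 'e, 'k::zero_neq_one) fa" where
  "fa_word u = (\<lambda>w. if w = u then 1 else 0)"

definition fa_zero :: "('v, 'e, 'k::zero) fa" where
  "fa_zero = (\<lambda>w. 0)"

definition fa_add :: "('v, 'e, 'k::plus) fa \<Rightarrow> ('v, 'e, 'k) fa \<Rightarrow> ('v, 'e, 'k) fa" where
  "fa_add f g = (\<lambda>w. f w + g w)"

definition fa_diff :: "('v, 'e, 'k::minus) fa \<Rightarrow> ('v, 'e, 'k) fa \<Rightarrow> ('v, 'e, 'k) fa" where
  "fa_diff f g = (\<lambda>w. f w - g w)"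

definition fa_smult :: "'k::times \<Rightarrow> ('v, 'e, 'k) fa \<Rightarrow> ('v, 'e, 'k) fa" where
  "fa_smult c f = (\<lambda>w. c * f w)"

definition fa_sum :: "('a \<Rightarrow> ('v, 'e, 'k::comm_monoid_add) fa) \<Rightarrow> 'a set \<Rightarrow> ('v, 'e, 'k) fa" where
  "fa_sum F A = (\<lambda>w. \<Sum>x\<in>A. F x w)"

definition fa_mult :: "('v, 'e, 'k::semiring_0) fa \<Rightarrow> ('v, 'e, 'k) fa \<Rightarrow> ('v, 'e, 'k) fa" where
  "fa_mult f g = (\<lambda>w. \<Sum>i\<le>length w. f (take i w) * g (drop i w))"

fun gstar :: "('v, 'e) gen \<Rightarrow> ('v, 'e) gen" where
  "gstar (V v) = V v"
| "gstar (Ed e) = Gh e"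
| "gstar (Gh e) = Ed e"

definition wstar :: "('v, 'e) gen list \<Rightarrow> ('v, 'e) gen list" where
  "wstar w = rev (map gstar w)"

definition fa_star :: "('k \<Rightarrow> 'k) \<Rightarrow> ('v, 'e, 'k) fa \<Rightarrow> ('v, 'e, 'k) fa" where
  "fa_star invK f = (\<lambda>w. invK (f (wstar w)))"

definition regular :: "('e \<Rightarrow> 'v) \<Rightarrow> 'v \<Rightarrow> bool" where
  "regular src v \<longleftrightarrow> finite {e. src e = v} \<and> {e. src e = v} \<noteq> {}"

inductive_set LPA_rels :: "('e \<Rightarrow> 'v) \<Rightarrow> ('e \<Rightarrow> 'v) \<Rightarrow> ('v, 'e, 'k::field) fa set"
  for src rng where
  relV: "fa_diff (fa_word [V v, V w]) (if v = w then fa_word [V v] else fa_zero) \<in> LPA_rels src rng"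
| relE1s: "fa_diff (fa_word [V (src e), Ed e]) (fa_word [Ed e]) \<in> LPA_rels src rng"
| relE1r: "fa_diff (fa_word [Ed e, V (rng e)]) (fa_word [Ed e]) \<in> LPA_rels src rng"
| relE2r: "fa_diff (fa_word [V (rng e), Gh e]) (fa_word [Gh e]) \<in> LPA_rels src rng"
| relE2s: "fa_diff (fa_word [Gh e, V (src e)]) (fa_word [Gh e]) \<in> LPA_rels src rng"
| relCK1: "fa_diff (fa_word [Gh e, Ed f]) (if e = f then fa_word [V (rng e)] else fa_zero) \<in> LPA_rels src rng"
| relCK2: "regular src v \<Longrightarrow>
    fa_diff (fa_word [V v]) (fa_sum (\<lambda>e. fa_word [Ed e, Gh e]) {e. src e = v}) \<in> LPA_rels src rng"

text \<open>The two-sided ideal of the (non-unital) free algebra generated by the relations: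
  the K-span of all u r w with r a relation and u, w (possibly empty) words.\<close>
inductive_set LPA_ideal :: "('e \<Rightarrow> 'v) \<Rightarrow> ('e \<Rightarrow> 'v) \<Rightarrow> ('v, 'e, 'k::field) fa set"
  for src rng where
  gen: "r \<in> LPA_rels src rng \<Longrightarrow> r \<in> LPA_ideal src rng"
| zero: "fa_zero \<in> LPA_ideal src rng"
| add: "a \<in> LPA_ideal src rng \<Longrightarrow> b \<in> LPA_ideal src rng \<Longrightarrow> fa_add a b \<in> LPA_ideal src rng"
| mul: "a \<in> LPA_ideal src rng \<Longrightarrow>
    fa_smult c (fa_mult (fa_mult (fa_word u) a) (fa_word w)) \<in> LPA_ideal src rng"

text \<open>A path is represented as (v, es): for es = [] it is the vertex v (length 0);
  otherwise it is the edge sequence es, and v must be the source of its first edge.\<close>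
definition is_path :: "('e \<Rightarrow> 'v) \<Rightarrow> ('e \<Rightarrow> 'v) \<Rightarrow> 'v \<times> 'e list \<Rightarrow> bool" where
  "is_path src rng p \<longleftrightarrow> (case p of (v, es) \<Rightarrow>
     (es \<noteq> [] \<longrightarrow> src (hd es) = v) \<and>
     (\<forall>i. Suc i < length es \<longrightarrow> rng (es ! i) = src (es ! Suc i)))"

definition p_src :: "'v \<times> 'e list \<Rightarrow> 'v" where
  "p_src p = fst p"

definition p_rng :: "('e \<Rightarrow> 'v) \<Rightarrow> 'v \<times> 'e list \<Rightarrow> 'v" where
  "p_rng rng p = (if snd p = [] then fst p else rng (last (snd p)))"

definition pw :: "'v \<times> 'e list \<Rightarrow> ('v, 'e) gen list" where
  "pw p = (if snd p = [] then [V (fst p)] else map Ed (snd p))"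

definition field_involution :: "('k::field \<Rightarrow> 'k) \<Rightarrow> bool" where
  "field_involution invK \<longleftrightarrow>
     (\<forall>a b. invK (a + b) = invK a + invK b) \<and>
     (\<forall>a b. invK (a * b) = invK a * invK b) \<and>
     (\<forall>a. invK (invK a) = a)"

definition inv_K_algebra ::
  "('k::field \<Rightarrow> 'k) \<Rightarrow> ('k \<Rightarrow> 'r::ring \<Rightarrow> 'r) \<Rightarrow> ('r \<Rightarrow> 'r) \<Rightarrow> bool" where
  "inv_K_algebra invK sm st \<longleftrightarrow>
     (\<forall>a x y. sm a (x + y) = sm a x + sm a y) \<and>
     (\<forall>a b x. sm (a + b) x = sm a x + sm b x) \<and>
     (\<forall>a b x. sm (a * b) x = sm a (sm b x)) \<and>
     (\<forall>x. sm 1 x = x) \<and>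
     (\<forall>a x y. sm a (x * y) = sm a x * y \<and> sm a (x * y) = x * sm a y) \<and>
     (\<forall>x y. st (x * y) = st y * st x) \<and>
     (\<forall>x. st (st x) = x) \<and>
     (\<forall>x y. st (x + y) = st x + st y) \<and>
     (\<forall>a x. st (sm a x) = sm (invK a) (st x))"

definition R_nonneg :: "('r::ring \<Rightarrow> 'r) \<Rightarrow> 'r \<Rightarrow> bool" where
  "R_nonneg st x \<longleftrightarrow> (\<exists>zs. x = sum_list (map (\<lambda>z. z * st z) zs))"

definition R_ge :: "('r::ring \<Rightarrow> 'r) \<Rightarrow> 'r \<Rightarrow> 'r \<Rightarrow> bool" where
  "R_ge st x y \<longleftrightarrow> R_nonneg st (x - y)"

text \<open>A map on L_K(E) = FA / LPA_ideal is represented by a map t on FA that is constant on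
  cosets of the ideal. Additivity, the trace property and K-linearity are required on FA
  (equivalently, of the induced map on the quotient).\<close>
definition LPA_trace ::
  "('e \<Rightarrow> 'v) \<Rightarrow> ('e \<Rightarrow> 'v) \<Rightarrow> (('v, 'e, 'k::field) fa \<Rightarrow> 'r::ring) \<Rightarrow> bool" where
  "LPA_trace src rng t \<longleftrightarrow>
     (\<forall>f\<in>FA. \<forall>g\<in>FA. fa_diff f g \<in> LPA_ideal src rng \<longrightarrow> t f = t g) \<and>
     (\<forall>f\<in>FA. \<forall>g\<in>FA. t (fa_add f g) = t f + t g) \<and>
     (\<forall>f\<in>FA. \<forall>g\<in>FA. t (fa_mult f g) = t (fa_mult g f))"

definition K_linear ::
  "('k::field \<Rightarrow> 'r::ring \<Rightarrow> 'r) \<Rightarrow> (('v, 'e, 'k) fa \<Rightarrow> 'r) \<Rightarrow> bool" where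
  "K_linear sm t \<longleftrightarrow> (\<forall>a. \<forall>f\<in>FA. t (fa_smult a f) = sm a (t f))"

definition canonical ::
  "('e \<Rightarrow> 'v) \<Rightarrow> ('e \<Rightarrow> 'v) \<Rightarrow> (('v, 'e, 'k::field) fa \<Rightarrow> 'r::ring) \<Rightarrow> bool" where
  "canonical src rng t \<longleftrightarrow>
     (\<forall>p q. is_path src rng p \<and> is_path src rng q \<and> p_rng rng p = p_rng rng q \<longrightarrow>
        t (fa_word (pw p @ wstar (pw q))) = (if p = q then t (fa_word [V (p_rng rng p)]) else 0))"

definition condP ::
  "('e \<Rightarrow> 'v) \<Rightarrow> ('e \<Rightarrow> 'v) \<Rightarrow> ('r::ring \<Rightarrow> 'r) \<Rightarrow> (('v, 'e, 'k::field) fa \<Rightarrow> 'r) \<Rightarrow> bool" where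
  "condP src rng st t \<longleftrightarrow>
     (\<forall>v I. finite I \<and> I \<subseteq> {e. src e = v} \<longrightarrow>
        R_nonneg st (t (fa_diff (fa_word [V v]) (fa_sum (\<lambda>e. fa_word [V (rng e)]) I))))"

end

(*
  Write <f, g> = t (f g^* ) for the sesquilinear form induced by t on the free algebra.

  (1) Both sides expand over pairs of words. A term p r_i r_i^* q^* q r_j r_j^* p^* reduces to
  r_i r_i^* r_j r_j^*: the vertex q^* q = r(q) is absorbed into r_j, and after rotating p to the end
  under the trace, p^* p = r(p) is absorbed into r_j^*.

  (2) Write x = z + a v and y = z + a P with P = e_1 e_1^* + ... + e_m e_m^*. Every word of z ends
  in some e_k^*, and by (CK1) and the distinctness of the e_i, e_k^* P = e_k^* = e_k^* v; symmetrically
  for P applied on the left of z^*. Hence <z, P> = <z, v> and <P, z> = <v, z>, so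
  t(x x^* ) - t(y y^* ) = a a^* t(v - r(e_1) - ... - r(e_m)), which is a sum of squares by (P).
*)

theory Submission
  imports Defs
begin

lemma fa_word_in_FA [intro]: "u \<noteq> [] \<Longrightarrow> (fa_word u :: ('v, 'e, 'k::zero_neq_one) fa) \<in> FA"
  by (auto simp: FA_def fa_word_def intro: finite_subset[of _ "{u}"])

lemma fa_zero_in_FA [intro]: "fa_zero \<in> FA"
  by (simp add: FA_def fa_zero_def)

lemma fa_add_in_FA [intro]:
  "f \<in> FA \<Longrightarrow> g \<in> FA \<Longrightarrow> fa_add f g \<in> (FA :: ('v, 'e, 'k::monoid_add) fa set)"
  by (auto simp: FA_def fa_add_def
      intro: finite_subset[of _ "{w. f w \<noteq> 0} \<union> {w. g w \<noteq> 0}"])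

lemma fa_diff_in_FA [intro]:
  "f \<in> FA \<Longrightarrow> g \<in> FA \<Longrightarrow> fa_diff f g \<in> (FA :: ('v, 'e, 'k::group_add) fa set)"
  by (auto simp: FA_def fa_diff_def
      intro: finite_subset[of _ "{w. f w \<noteq> 0} \<union> {w. g w \<noteq> 0}"])

lemma fa_smult_in_FA [intro]: "f \<in> FA \<Longrightarrow> fa_smult c f \<in> (FA :: ('v, 'e, 'k::mult_zero) fa set)"
  by (auto simp: FA_def fa_smult_def intro: finite_subset[of _ "{w. f w \<noteq> 0}"])

lemma fa_sum_in_FA [intro]: "(\<And>i. i \<in> I \<Longrightarrow> F i \<in> FA) \<Longrightarrow> fa_sum F I \<in> FA"
proof (induction I rule: infinite_finite_induct)
  case (insert i I)
  have "fa_sum F (insert i I) = fa_add (F i) (fa_sum F I)"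
    using insert.hyps by (simp add: fa_sum_def fa_add_def)
  with insert show ?case by auto
qed (auto simp: fa_sum_def FA_def)

lemma fa_mult_word_word:
  "fa_mult (fa_word u) (fa_word w) = (fa_word (u @ w) :: ('v, 'e, 'k::semiring_1) fa)"
  (is "?L = ?R")
proof
  fix x :: "('v, 'e) gen list"
  have "(fa_word u (take i x) * fa_word w (drop i x) :: 'k)
      = (if i = length u \<and> x = u @ w then 1 else 0)"
    if "i \<le> length x" for i
    using that by (auto simp: fa_word_def append_eq_conv_conj)
  then have "?L x = (\<Sum>i\<le>length x. if i = length u \<and> x = u @ w then 1 else 0 :: 'k)"
    unfolding fa_mult_def by (intro sum.cong) auto
  also have "\<dots> = ?R x"
    by (auto simp: fa_word_def)
  finally show "?L x = ?R x" .
qed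

lemma fa_mult_in_FA [intro]:
  assumes "f \<in> FA" "g \<in> FA"
  shows "fa_mult f g \<in> (FA :: ('v, 'e, 'k::semiring_0) fa set)"
proof -
  have "{w. fa_mult f g w \<noteq> 0} \<subseteq> (\<lambda>(u, v). u @ v) ` ({u. f u \<noteq> 0} \<times> {v. g v \<noteq> 0})"
  proof
    fix w assume "w \<in> {w. fa_mult f g w \<noteq> 0}"
    then obtain i where "f (take i w) * g (drop i w) \<noteq> 0"
      unfolding fa_mult_def by (auto elim: sum.not_neutral_contains_not_neutral)
    then show "w \<in> (\<lambda>(u, v). u @ v) ` ({u. f u \<noteq> 0} \<times> {v. g v \<noteq> 0})"
      by (intro image_eqI[of _ _ "(take i w, drop i w)"]) auto
  qed
  moreover have "fa_mult f g [] = 0"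
    using assms by (simp add: fa_mult_def FA_def)
  ultimately show ?thesis
    using assms by (auto simp: FA_def intro: finite_subset)
qed

lemma gstar_gstar [simp]: "gstar (gstar g) = g"
  by (cases g) auto

lemma wstar_wstar [simp]: "wstar (wstar u) = u"
  by (simp add: wstar_def rev_map comp_def)

lemma wstar_append [simp]: "wstar (u @ w) = wstar w @ wstar u"
  by (simp add: wstar_def)

lemma wstar_Nil [simp]: "wstar [] = []"
  by (simp add: wstar_def)

lemma wstar_Cons [simp]: "wstar (g # u) = wstar u @ [gstar g]"
  by (simp add: wstar_def)

lemma wstar_eq_iff: "wstar u = w \<longleftrightarrow> u = wstar w"
  by auto

lemma fa_star_in_FA [intro]:
  assumes "invK 0 = 0" "f \<in> FA"
  shows "fa_star invK f \<in> FA"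
proof -
  have "{w. fa_star invK f w \<noteq> 0} \<subseteq> wstar ` {w. f w \<noteq> 0}"
    using assms(1) by (auto simp: fa_star_def intro: image_eqI[of _ wstar, OF wstar_wstar[symmetric]])
  with assms show ?thesis
    by (auto simp: FA_def fa_star_def intro: finite_subset)
qed

lemma fa_mult_add_left: "fa_mult (fa_add f g) h = fa_add (fa_mult f h) (fa_mult g h)"
  by (simp add: fa_mult_def fa_add_def distrib_right sum.distrib)

lemma fa_mult_add_right: "fa_mult f (fa_add g h) = fa_add (fa_mult f g) (fa_mult f h)"
  by (simp add: fa_mult_def fa_add_def distrib_left sum.distrib)

lemma fa_mult_diff_left:
  "fa_mult (fa_diff f g) h = (fa_diff (fa_mult f h) (fa_mult g h) :: ('v, 'e, 'k::ring) fa)"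
  by (simp add: fa_mult_def fa_diff_def left_diff_distrib sum_subtractf)

lemma fa_mult_diff_right:
  "fa_mult f (fa_diff g h) = (fa_diff (fa_mult f g) (fa_mult f h) :: ('v, 'e, 'k::ring) fa)"
  by (simp add: fa_mult_def fa_diff_def right_diff_distrib sum_subtractf)

lemma fa_mult_zero_left [simp]: "fa_mult fa_zero f = fa_zero"
  by (simp add: fa_mult_def fa_zero_def)

lemma fa_mult_zero_right [simp]: "fa_mult f fa_zero = fa_zero"
  by (simp add: fa_mult_def fa_zero_def)

lemma fa_mult_sum_left: "fa_mult (fa_sum F I) g = fa_sum (\<lambda>i. fa_mult (F i) g) I"
  unfolding fa_mult_def fa_sum_def sum_distrib_right by (rule ext, rule sum.swap)

lemma fa_mult_sum_right: "fa_mult f (fa_sum G I) = fa_sum (\<lambda>i. fa_mult f (G i)) I"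
  unfolding fa_mult_def fa_sum_def sum_distrib_left by (rule ext, rule sum.swap)

lemma fa_mult_smult_smult:
  "fa_mult (fa_smult c f) (fa_smult d g)
     = (fa_smult (c * d) (fa_mult f g) :: ('v, 'e, 'k::comm_semiring_0) fa)"
  by (simp add: fa_mult_def fa_smult_def sum_distrib_left mult_ac)

lemma fa_smult_sum:
  "fa_smult c (fa_sum F I) = (fa_sum (\<lambda>i. fa_smult c (F i)) I :: ('v, 'e, 'k::semiring_0) fa)"
  by (simp add: fa_smult_def fa_sum_def sum_distrib_left)

lemma fa_star_add:
  "(\<And>a b. invK (a + b) = invK a + invK b) \<Longrightarrow>
   fa_star invK (fa_add f g) = fa_add (fa_star invK f) (fa_star invK g)"
  by (simp add: fa_star_def fa_add_def)

lemma fa_star_sum: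
  assumes "\<And>a b. invK (a + b) = invK a + invK b" "invK 0 = 0"
  shows "fa_star invK (fa_sum F I) = fa_sum (\<lambda>i. fa_star invK (F i)) I"
proof -
  have "invK (\<Sum>i\<in>I. F i w) = (\<Sum>i\<in>I. invK (F i w))" for w
    by (induction I rule: infinite_finite_induct) (simp_all add: assms)
  then show ?thesis
    by (simp add: fa_star_def fa_sum_def)
qed

lemma fa_star_smult_word:
  "invK 0 = 0 \<Longrightarrow>
   fa_star invK (fa_smult c (fa_word u))
     = (fa_smult (invK c) (fa_word (wstar u)) :: ('v, 'e, 'k::semiring_1) fa)"
  by (auto simp: fa_star_def fa_smult_def fa_word_def wstar_eq_iff fun_eq_iff)

lemma fa_sum_Sigma:
  "finite A \<Longrightarrow> (\<And>i. i \<in> A \<Longrightarrow> finite (B i)) \<Longrightarrow>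
   fa_sum (\<lambda>i. fa_sum (F i) (B i)) A = fa_sum (\<lambda>(i, j). F i j) (Sigma A B)"
  by (simp add: fa_sum_def sum.Sigma split_def)

lemma successively_iff_nth:
  "successively P xs \<longleftrightarrow> (\<forall>i. Suc i < length xs \<longrightarrow> P (xs ! i) (xs ! Suc i))"
  by (induction P xs rule: successively.induct) (auto simp: nth_Cons less_Suc_eq_0_disj)

lemma is_path_iff:
  "is_path src rng (x, es) \<longleftrightarrow>
     (es \<noteq> [] \<longrightarrow> src (hd es) = x) \<and> successively (\<lambda>e f. rng e = src f) es"
  by (simp add: is_path_def successively_iff_nth)

lemma wstar_map_Ed [simp]: "wstar (map Ed es) = rev (map Gh es)"
  by (simp add: wstar_def comp_def)

lemma pw_not_Nil [simp]: "pw p \<noteq> []"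
  by (simp add: pw_def)

lemma R_nonneg_scale:
  assumes R: "inv_K_algebra invK sm st" and x: "R_nonneg st x"
  shows "R_nonneg st (sm (a * invK a) x)"
proof -
  have sm_add: "sm c (y + w) = sm c y + sm c w"
    and sm_mult: "sm (b * c) y = sm b (sm c y)"
    and sm_times: "sm c (y * w) = sm c y * w" "sm c (y * w) = y * sm c w"
    and st_sm: "st (sm c y) = sm (invK c) (st y)" for b c y w
    using R unfolding inv_K_algebra_def by blast+
  have sm_sum_list: "sm c (\<Sum>z\<leftarrow>zs. f z) = (\<Sum>z\<leftarrow>zs. sm c (f z))" for c f zs
    using sm_add[of c 0 0] by (induction zs) (simp_all add: sm_add)
  have "sm a z * st (sm a z) = sm (a * invK a) (z * st z)" for z
    by (simp add: st_sm flip: sm_times) (metis sm_mult mult.commute)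
  moreover obtain zs where zs: "x = (\<Sum>z\<leftarrow>zs. z * st z)"
    using x by (auto simp: R_nonneg_def)
  ultimately have "sm (a * invK a) x = (\<Sum>z\<leftarrow>map (sm a) zs. z * st z)"
    by (simp add: zs sm_sum_list comp_def)
  then show ?thesis
    unfolding R_nonneg_def by blast
qed

locale linear_LPA_trace =
  fixes src rng :: "'e \<Rightarrow> 'v"
    and invK :: "'k::field \<Rightarrow> 'k"
    and sm :: "'k \<Rightarrow> 'r::ring \<Rightarrow> 'r"
    and st :: "'r \<Rightarrow> 'r"
    and t :: "('v, 'e, 'k) fa \<Rightarrow> 'r"
  assumes invK: "field_involution invK"
    and R: "inv_K_algebra invK sm st"
    and tr: "LPA_trace src rng t"
    and lin: "K_linear sm t"
begin

lemma invK_add: "invK (a + b) = invK a + invK b"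
  using invK by (simp add: field_involution_def)

lemma invK_0: "invK 0 = 0"
  using invK_add[of 0 0] by (metis add.right_neutral add_cancel_right_right)

lemma sm_add: "sm a (x + y) = sm a x + sm a y"
  using R by (simp add: inv_K_algebra_def)

lemma sm_0: "sm a 0 = 0"
  using sm_add[of a 0 0] by simp

lemma sm_diff: "sm a (x - y) = sm a x - sm a y"
  by (metis sm_add diff_add_cancel eq_diff_eq)

lemma sm_sum: "sm a (\<Sum>i\<in>I. f i) = (\<Sum>i\<in>I. sm a (f i))"
  by (induction I rule: infinite_finite_induct) (simp_all add: sm_0 sm_add)

lemma t_add: "f \<in> FA \<Longrightarrow> g \<in> FA \<Longrightarrow> t (fa_add f g) = t f + t g"
  using tr by (simp add: LPA_trace_def)

lemma t_zero: "t fa_zero = 0"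
proof -
  have "fa_add fa_zero fa_zero = (fa_zero :: ('v, 'e, 'k) fa)"
    by (simp add: fa_add_def fa_zero_def)
  then show ?thesis
    using t_add[of fa_zero fa_zero] by auto
qed

lemma t_sum:
  "finite I \<Longrightarrow> (\<And>i. i \<in> I \<Longrightarrow> F i \<in> FA) \<Longrightarrow> t (fa_sum F I) = (\<Sum>i\<in>I. t (F i))"
proof (induction I rule: finite_induct)
  case empty
  then show ?case
    using t_zero by (simp add: fa_sum_def fa_zero_def)
next
  case (insert i I)
  have "fa_sum F (insert i I) = fa_add (F i) (fa_sum F I)"
    using insert.hyps by (simp add: fa_sum_def fa_add_def)
  with insert show ?case
    by (simp add: t_add fa_sum_in_FA)
qed

lemma t_diff:
  assumes "f \<in> FA" "g \<in> FA"
  shows "t (fa_diff f g) = t f - t g"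
proof -
  have "fa_add (fa_diff f g) g = f"
    by (simp add: fa_add_def fa_diff_def)
  then show ?thesis
    using t_add[OF fa_diff_in_FA[OF assms] assms(2)] by (simp add: eq_diff_eq)
qed

lemma t_smult: "f \<in> FA \<Longrightarrow> t (fa_smult a f) = sm a (t f)"
  using lin by (simp add: K_linear_def)

abbreviation tw :: "('v, 'e) gen list \<Rightarrow> 'r" where
  "tw u \<equiv> t (fa_word u)"

lemma tw_rotate: "tw (u @ w) = tw (w @ u)"
proof (cases "u = [] \<or> w = []")
  case False
  then show ?thesis
    using tr fa_word_in_FA[of u] fa_word_in_FA[of w]
    by (auto simp: LPA_trace_def fa_mult_word_word[symmetric])
qed auto

lemma t_relation_in_context:
  assumes "fa_diff (fa_word l) g \<in> LPA_rels src rng" "l \<noteq> []" "h \<in> FA"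
    and "fa_mult (fa_mult (fa_word u) g) (fa_word w) = h"
  shows "tw (u @ l @ w) = t h"
proof -
  have "fa_smult 1 (fa_mult (fa_mult (fa_word u) (fa_diff (fa_word l) g)) (fa_word w))
      \<in> LPA_ideal src rng"
    using assms(1) by (intro LPA_ideal.mul LPA_ideal.gen)
  also have "fa_smult 1 (fa_mult (fa_mult (fa_word u) (fa_diff (fa_word l) g)) (fa_word w))
      = fa_diff (fa_word (u @ l @ w)) h"
    using assms(4) by (simp add: fa_smult_def fa_mult_diff_left fa_mult_diff_right fa_mult_word_word)
  finally show ?thesis
    using tr assms(2,3) fa_word_in_FA[of "u @ l @ w"] unfolding LPA_trace_def by blast
qed

lemma tw_relation:
  "fa_diff (fa_word l) (fa_word r) \<in> (LPA_rels src rng :: ('v, 'e, 'k) fa set) \<Longrightarrow>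
   l \<noteq> [] \<Longrightarrow> r \<noteq> [] \<Longrightarrow> tw (u @ l @ w) = tw (u @ r @ w)"
  by (rule t_relation_in_context[where g = "fa_word r"]) (auto simp: fa_mult_word_word)

lemma tw_relation_zero:
  "fa_diff (fa_word l) fa_zero \<in> (LPA_rels src rng :: ('v, 'e, 'k) fa set) \<Longrightarrow>
   l \<noteq> [] \<Longrightarrow> tw (u @ l @ w) = 0"
  using t_relation_in_context[of l fa_zero fa_zero u w] t_zero fa_zero_in_FA by auto

lemma tw_vertex_idem: "tw (u @ [V x, V x] @ w) = tw (u @ [V x] @ w)"
  by (rule tw_relation) (use LPA_rels.relV[where v = x and w = x] in auto)

lemma tw_src_edge: "tw (u @ [V (src e), Ed e] @ w) = tw (u @ [Ed e] @ w)"
  by (rule tw_relation) (use LPA_rels.relE1s[where e = e] in auto)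

lemma tw_edge_rng: "tw (u @ [Ed e, V (rng e)] @ w) = tw (u @ [Ed e] @ w)"
  by (rule tw_relation) (use LPA_rels.relE1r[where e = e] in auto)

lemma tw_rng_ghost: "tw (u @ [V (rng e), Gh e] @ w) = tw (u @ [Gh e] @ w)"
  by (rule tw_relation) (use LPA_rels.relE2r[where e = e] in auto)

lemma tw_ghost_src: "tw (u @ [Gh e, V (src e)] @ w) = tw (u @ [Gh e] @ w)"
  by (rule tw_relation) (use LPA_rels.relE2s[where e = e] in auto)

lemma tw_ghost_edge: "tw (u @ [Gh e, Ed e] @ w) = tw (u @ [V (rng e)] @ w)"
  by (rule tw_relation) (use LPA_rels.relCK1[where e = e and f = e] in auto)

lemma tw_ghost_edge_ne: "e \<noteq> f \<Longrightarrow> tw (u @ [Gh e, Ed f] @ w) = 0"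
  by (rule tw_relation_zero) (use LPA_rels.relCK1[where e = e and f = f] in auto)

lemma tw_ghost_edges_edges:
  "es \<noteq> [] \<Longrightarrow> successively (\<lambda>e f. rng e = src f) es \<Longrightarrow>
   tw (u @ rev (map Gh es) @ map Ed es @ w) = tw (u @ [V (rng (last es))] @ w)"
proof (induction es arbitrary: u w)
  case (Cons e es)
  show ?case
  proof (cases es)
    case Nil
    then show ?thesis
      using tw_ghost_edge[of u e w] by simp
  next
    case (Cons f es')
    have "tw (u @ rev (map Gh (e # es)) @ map Ed (e # es) @ w)
        = tw ((u @ rev (map Gh es)) @ [V (rng e), Ed f] @ map Ed es' @ w)"
      using tw_ghost_edge[of "u @ rev (map Gh es)" e "map Ed es @ w"] by (simp add: Cons)
    also have "\<dots> = tw (u @ rev (map Gh es) @ map Ed es @ w)"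
      using tw_src_edge[of "u @ rev (map Gh es)" f "map Ed es' @ w"] Cons.prems(2)
      by (simp add: Cons)
    also have "\<dots> = tw (u @ [V (rng (last es))] @ w)"
      using Cons.IH Cons.prems(2) by (simp add: Cons)
    finally show ?thesis
      by (simp add: Cons)
  qed
qed simp

lemma tw_ghost_path_path:
  "is_path src rng q \<Longrightarrow> tw (u @ wstar (pw q) @ pw q @ w) = tw (u @ [V (p_rng rng q)] @ w)"
  using tw_vertex_idem tw_ghost_edges_edges
  by (cases q) (auto simp: pw_def p_rng_def is_path_iff)

lemma tw_src_path: "is_path src rng r \<Longrightarrow> tw (u @ [V (p_src r)] @ pw r @ w) = tw (u @ pw r @ w)"
  using tw_vertex_idem tw_src_edge
  by (cases r) (auto simp: pw_def p_src_def is_path_iff neq_Nil_conv)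

lemma tw_ghost_path_src:
  assumes "is_path src rng r"
  shows "tw (u @ wstar (pw r) @ [V (p_src r)] @ w) = tw (u @ wstar (pw r) @ w)"
proof (cases r)
  case (Pair x es)
  show ?thesis
  proof (cases "es = []")
    case False
    then obtain f es' where "es = f # es'"
      by (metis neq_Nil_conv)
    then show ?thesis
      using tw_ghost_src[of "u @ rev (map Gh es')" f w] assms
      by (simp add: Pair pw_def p_src_def is_path_iff)
  qed (use tw_vertex_idem in \<open>simp add: Pair pw_def p_src_def\<close>)
qed

definition trace_form :: "('v, 'e, 'k) fa \<Rightarrow> ('v, 'e, 'k) fa \<Rightarrow> 'r" where
  "trace_form f g = t (fa_mult f (fa_star invK g))"

lemma trace_form_add_left:
  "f \<in> FA \<Longrightarrow> g \<in> FA \<Longrightarrow> h \<in> FA \<Longrightarrow>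
   trace_form (fa_add f g) h = trace_form f h + trace_form g h"
  by (simp add: trace_form_def fa_mult_add_left t_add fa_mult_in_FA fa_star_in_FA invK_0)

lemma trace_form_add_right:
  "f \<in> FA \<Longrightarrow> g \<in> FA \<Longrightarrow> h \<in> FA \<Longrightarrow>
   trace_form f (fa_add g h) = trace_form f g + trace_form f h"
  by (simp add: trace_form_def fa_star_add invK_add fa_mult_add_right t_add fa_mult_in_FA
      fa_star_in_FA invK_0)

lemma trace_form_sum_left:
  "finite I \<Longrightarrow> (\<And>i. i \<in> I \<Longrightarrow> F i \<in> FA) \<Longrightarrow> g \<in> FA \<Longrightarrow>
   trace_form (fa_sum F I) g = (\<Sum>i\<in>I. trace_form (F i) g)"
  by (simp add: trace_form_def fa_mult_sum_left t_sum fa_mult_in_FA fa_star_in_FA invK_0)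

lemma trace_form_sum_right:
  "finite I \<Longrightarrow> (\<And>i. i \<in> I \<Longrightarrow> G i \<in> FA) \<Longrightarrow> f \<in> FA \<Longrightarrow>
   trace_form f (fa_sum G I) = (\<Sum>i\<in>I. trace_form f (G i))"
  by (simp add: trace_form_def fa_star_sum invK_add invK_0 fa_mult_sum_right t_sum
      fa_mult_in_FA fa_star_in_FA)

lemma trace_form_smult_word:
  "u \<noteq> [] \<Longrightarrow> trace_form (fa_smult c (fa_word u)) (fa_smult d (fa_word w))
     = sm (c * invK d) (tw (u @ wstar w))"
  by (simp add: trace_form_def fa_star_smult_word invK_0 fa_mult_smult_smult fa_mult_word_word
      t_smult fa_word_in_FA)

lemma trace_form_lincomb:
  assumes "finite I" "finite J" "\<And>i. i \<in> I \<Longrightarrow> u i \<noteq> []" "\<And>j. j \<in> J \<Longrightarrow> w j \<noteq> []"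
  shows "trace_form (fa_sum (\<lambda>i. fa_smult (c i) (fa_word (u i))) I)
                    (fa_sum (\<lambda>j. fa_smult (d j) (fa_word (w j))) J)
       = (\<Sum>i\<in>I. \<Sum>j\<in>J. sm (c i * invK (d j)) (tw (u i @ wstar (w j))))"
  using assms
  by (simp add: trace_form_sum_left trace_form_sum_right trace_form_smult_word
      fa_sum_in_FA fa_smult_in_FA fa_word_in_FA sum.swap[of _ J])

lemma tw_conjugate_by_paths:
  assumes p: "is_path src rng p" and q: "is_path src rng q" and pq: "p_rng rng p = p_rng rng q"
    and r: "is_path src rng r" "p_src r = p_rng rng p"
  shows "tw (pw p @ x @ wstar (pw q) @ pw q @ pw r @ wstar (pw r) @ wstar (pw p))
       = tw (x @ pw r @ wstar (pw r))"
proof -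
  have "tw (pw p @ x @ wstar (pw q) @ pw q @ pw r @ wstar (pw r) @ wstar (pw p))
      = tw ((pw p @ x) @ [V (p_src r)] @ pw r @ wstar (pw r) @ wstar (pw p))"
    using tw_ghost_path_path[OF q, of "pw p @ x"] pq r(2) by simp
  also have "\<dots> = tw (pw p @ x @ pw r @ wstar (pw r) @ wstar (pw p))"
    using tw_src_path[OF r(1), of "pw p @ x"] by simp
  also have "\<dots> = tw ((x @ pw r) @ wstar (pw r) @ wstar (pw p) @ pw p @ [])"
    using tw_rotate[of "pw p"] by simp
  also have "\<dots> = tw ((x @ pw r) @ wstar (pw r) @ [V (p_src r)] @ [])"
    using tw_ghost_path_path[OF p, of "x @ pw r @ wstar (pw r)" "[]"] r(2) by simp
  also have "\<dots> = tw (x @ pw r @ wstar (pw r))"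
    using tw_ghost_path_src[OF r(1), of "x @ pw r" "[]"] by simp
  finally show ?thesis .
qed

lemma trace_form_conjugate_by_paths:
  fixes r :: "nat \<Rightarrow> 'v \<times> 'e list" and a :: "nat \<Rightarrow> 'k"
  assumes p: "is_path src rng p" and q: "is_path src rng q" and pq: "p_rng rng p = p_rng rng q"
    and r: "\<forall>i<m. is_path src rng (r i) \<and> p_src (r i) = p_rng rng p"
  defines "x \<equiv> fa_sum (\<lambda>i. fa_smult (a i)
              (fa_word (pw p @ pw (r i) @ wstar (pw (r i)) @ wstar (pw q)))) {..<m}"
    and "y \<equiv> fa_sum (\<lambda>i. fa_smult (a i) (fa_word (pw (r i) @ wstar (pw (r i))))) {..<m}"
  shows "trace_form x x = trace_form y y"
proof -
  have "tw ((pw p @ pw (r i) @ wstar (pw (r i)) @ wstar (pw q))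
            @ wstar (pw p @ pw (r j) @ wstar (pw (r j)) @ wstar (pw q)))
      = tw ((pw (r i) @ wstar (pw (r i))) @ wstar (pw (r j) @ wstar (pw (r j))))"
    if "j < m" for i j
    using tw_conjugate_by_paths[OF p q pq, of "r j" "pw (r i) @ wstar (pw (r i))"] r that
    by simp
  then show ?thesis
    unfolding x_def y_def by (simp add: trace_form_lincomb)
qed

context
  fixes v :: 'v and e :: "nat \<Rightarrow> 'e" and m :: nat
  assumes inj: "inj_on e {..<m}" and src_e: "\<And>i. i < m \<Longrightarrow> src (e i) = v"
begin

lemma tw_append_sum_projections:
  assumes k: "k < m"
  shows "(\<Sum>i<m. tw (s @ [Gh (e k), Ed (e i), Gh (e i)])) = tw (s @ [Gh (e k), V v])"
proof -
  have "tw (s @ [Gh (e k), Ed (e i), Gh (e i)]) = 0" if "i < m" "i \<noteq> k" for i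
    using tw_ghost_edge_ne[of "e k" "e i" s "[Gh (e i)]"] inj_onD[OF inj, of k i] k that by auto
  then have "(\<Sum>i<m. tw (s @ [Gh (e k), Ed (e i), Gh (e i)]))
      = tw (s @ [Gh (e k), Ed (e k), Gh (e k)])"
    using k by (simp add: sum.remove[of "{..<m}" k] sum.neutral)
  also have "\<dots> = tw (s @ [Gh (e k)])"
    using tw_ghost_edge[of s "e k" "[Gh (e k)]"] tw_rng_ghost[of s "e k" "[]"] by simp
  also have "\<dots> = tw (s @ [Gh (e k), V v])"
    using tw_ghost_src[of s "e k" "[]"] src_e[OF k] by simp
  finally show ?thesis .
qed

lemma tw_prepend_sum_projections:
  assumes k: "k < m"
  shows "(\<Sum>i<m. tw ([Ed (e i), Gh (e i), Ed (e k)] @ s)) = tw ([V v, Ed (e k)] @ s)"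
proof -
  have "tw ([Ed (e i), Gh (e i), Ed (e k)] @ s) = 0" if "i < m" "i \<noteq> k" for i
    using tw_ghost_edge_ne[of "e i" "e k" "[Ed (e i)]" s] inj_onD[OF inj, of i k] k that by auto
  then have "(\<Sum>i<m. tw ([Ed (e i), Gh (e i), Ed (e k)] @ s))
      = tw ([Ed (e k), Gh (e k), Ed (e k)] @ s)"
    using k by (simp add: sum.remove[of "{..<m}" k] sum.neutral)
  also have "\<dots> = tw ([Ed (e k)] @ s)"
    using tw_ghost_edge[of "[Ed (e k)]" "e k" s] tw_edge_rng[of "[]" "e k" s] by simp
  also have "\<dots> = tw ([V v, Ed (e k)] @ s)"
    using tw_src_edge[of "[]" "e k" s] src_e[OF k] by simp
  finally show ?thesis .
qed

abbreviation vertex_term :: "'k \<Rightarrow> ('v, 'e, 'k) fa" where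
  "vertex_term a \<equiv> fa_smult a (fa_word [V v])"

abbreviation projections_term :: "'k \<Rightarrow> ('v, 'e, 'k) fa" where
  "projections_term a \<equiv> fa_smult a (fa_sum (\<lambda>i. fa_word [Ed (e i), Gh (e i)]) {..<m})"

lemma projections_term_eq:
  "projections_term a = fa_sum (\<lambda>i. fa_smult a (fa_word [Ed (e i), Gh (e i)])) {..<m}"
  by (rule fa_smult_sum)

lemma projections_term_in_FA: "projections_term a \<in> FA"
  by (auto simp: projections_term_eq)

lemma trace_form_ghost_word_projections:
  assumes "k < m"
  shows "trace_form (fa_smult c (fa_word (s @ [Gh (e k)]))) (projections_term a)
       = trace_form (fa_smult c (fa_word (s @ [Gh (e k)]))) (vertex_term a)"
  using tw_append_sum_projections[OF assms, of s]
  by (simp add: projections_term_eq trace_form_sum_right trace_form_smult_word fa_smult_in_FA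
      fa_word_in_FA flip: sm_sum)

lemma trace_form_projections_ghost_word:
  assumes "k < m"
  shows "trace_form (projections_term a) (fa_smult c (fa_word (s @ [Gh (e k)])))
       = trace_form (vertex_term a) (fa_smult c (fa_word (s @ [Gh (e k)])))"
  using tw_prepend_sum_projections[OF assms, of "wstar s"]
  by (simp add: projections_term_eq trace_form_sum_left trace_form_smult_word fa_smult_in_FA
      fa_word_in_FA flip: sm_sum)

lemma trace_form_projections_projections:
  "trace_form (projections_term a) (projections_term a)
     = (\<Sum>i<m. sm (a * invK a) (tw [V (rng (e i))]))"
proof -
  have "trace_form (fa_smult a (fa_word ([Ed (e i)] @ [Gh (e i)]))) (projections_term a)
      = sm (a * invK a) (tw [V (rng (e i))])" if "i < m" for i
  proof -
    have "tw [Ed (e i), Gh (e i), V v] = tw ([Gh (e i)] @ [Ed (e i)])"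
      using tw_ghost_src[of "[Ed (e i)]" "e i" "[]"] tw_rotate[of "[Ed (e i)]"] src_e[OF that]
      by simp
    also have "\<dots> = tw [V (rng (e i))]"
      using tw_ghost_edge[of "[]" "e i" "[]"] by simp
    finally show ?thesis
      using trace_form_ghost_word_projections[OF that, of a "[Ed (e i)]"]
      by (simp add: trace_form_smult_word)
  qed
  then show ?thesis
    by (subst (1) projections_term_eq)
      (simp add: trace_form_sum_left projections_term_in_FA fa_smult_in_FA fa_word_in_FA)
qed

lemma trace_form_vertex_minus_projections:
  fixes c :: "'j \<Rightarrow> 'k"
  assumes J: "finite J" and u: "\<And>j. j \<in> J \<Longrightarrow> \<exists>s k. k < m \<and> u j = s @ [Gh (e k)]"
  defines "z \<equiv> fa_sum (\<lambda>j. fa_smult (c j) (fa_word (u j))) J"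
  shows "trace_form (fa_add z (vertex_term a)) (fa_add z (vertex_term a))
         - trace_form (fa_add z (projections_term a)) (fa_add z (projections_term a))
       = sm (a * invK a) (tw [V v] - (\<Sum>i<m. tw [V (rng (e i))]))"
proof -
  have words: "fa_smult (c j) (fa_word (u j)) \<in> FA" if "j \<in> J" for j
    using u[OF that] by (auto intro!: fa_smult_in_FA fa_word_in_FA)
  then have z: "z \<in> FA"
    unfolding z_def by (rule fa_sum_in_FA)
  have "trace_form (fa_smult (c j) (fa_word (u j))) (projections_term a)
      = trace_form (fa_smult (c j) (fa_word (u j))) (vertex_term a)"
    and "trace_form (projections_term a) (fa_smult (c j) (fa_word (u j)))
      = trace_form (vertex_term a) (fa_smult (c j) (fa_word (u j)))" if "j \<in> J" for j
    using u[OF that] trace_form_ghost_word_projections trace_form_projections_ghost_word by auto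
  then have "trace_form z (projections_term a) = trace_form z (vertex_term a)"
    and "trace_form (projections_term a) z = trace_form (vertex_term a) z"
    using J words unfolding z_def
    by (simp_all add: trace_form_sum_left trace_form_sum_right projections_term_in_FA
        fa_smult_in_FA fa_word_in_FA)
  moreover have "trace_form (vertex_term a) (vertex_term a) = sm (a * invK a) (tw [V v])"
    using tw_vertex_idem[of "[]" v "[]"] by (simp add: trace_form_smult_word)
  moreover have "vertex_term a \<in> FA"
    by (intro fa_smult_in_FA fa_word_in_FA) simp
  ultimately show ?thesis
    using z projections_term_in_FA[of a]
    by (simp add: trace_form_add_left trace_form_add_right fa_add_in_FA
        trace_form_projections_projections sm_diff sm_sum)
qed

end

lemma t_vertex_minus_ranges:
  fixes e :: "nat \<Rightarrow> 'e"
  assumes "inj_on e {..<m}"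
  shows "t (fa_diff (fa_word [V v]) (fa_sum (\<lambda>f. fa_word [V (rng f)]) (e ` {..<m})))
     = tw [V v] - (\<Sum>i<m. tw [V (rng (e i))])"
proof -
  have "t (fa_sum (\<lambda>f. fa_word [V (rng f)]) (e ` {..<m}))
      = (\<Sum>f\<in>e ` {..<m}. tw [V (rng f)])"
    by (rule t_sum) (simp_all add: fa_word_in_FA)
  also have "\<dots> = (\<Sum>i<m. tw [V (rng (e i))])"
    using sum.reindex[OF assms] by simp
  finally show ?thesis
    by (simp add: t_diff fa_sum_in_FA fa_word_in_FA)
qed

lemma trace_form_vertex_ge_projections:
  fixes e :: "nat \<Rightarrow> 'e" and mi :: "nat \<Rightarrow> nat" and r :: "nat \<Rightarrow> nat \<Rightarrow> 'v \<times> 'e list"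
    and aa :: "nat \<Rightarrow> nat \<Rightarrow> 'k" and a :: 'k
  assumes P: "condP src rng st t" and inj: "inj_on e {..<m}" and src_e: "\<forall>i<m. src (e i) = v"
  defines "z \<equiv> fa_sum (\<lambda>i. fa_sum (\<lambda>j. fa_smult (aa i j)
              (fa_word ([Ed (e i)] @ pw (r i j) @ wstar (pw (r i j)) @ [Gh (e i)]))) {..<mi i}) {..<m}"
  defines "x \<equiv> fa_add z (fa_smult a (fa_word [V v]))"
    and "y \<equiv> fa_add z (fa_smult a (fa_sum (\<lambda>i. fa_word [Ed (e i), Gh (e i)]) {..<m}))"
  shows "R_ge st (trace_form x x) (trace_form y y)"
proof -
  define J where "J = (SIGMA i:{..<m}. {..<mi i})"
  define w where "w = (\<lambda>(i, j). (Ed (e i) # pw (r i j) @ wstar (pw (r i j))) @ [Gh (e i)])"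
  have z_J: "z = fa_sum (\<lambda>p. fa_smult (case_prod aa p) (fa_word (w p))) J"
    unfolding z_def J_def w_def by (simp add: fa_sum_Sigma split_def)
  have w_ghost: "\<exists>s k. k < m \<and> w p = s @ [Gh (e k)]" if "p \<in> J" for p
    using that unfolding J_def w_def by auto
  have "finite (e ` {..<m})" "e ` {..<m} \<subseteq> {f. src f = v}"
    using src_e by auto
  with P have "R_nonneg st
      (t (fa_diff (fa_word [V v]) (fa_sum (\<lambda>f. fa_word [V (rng f)]) (e ` {..<m}))))"
    unfolding condP_def by blast
  then have "R_nonneg st (sm (a * invK a) (tw [V v] - (\<Sum>i<m. tw [V (rng (e i))])))"
    by (simp add: t_vertex_minus_ranges[OF inj] R_nonneg_scale[OF R])
  moreover have "trace_form x x - trace_form y y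
      = sm (a * invK a) (tw [V v] - (\<Sum>i<m. tw [V (rng (e i))]))"
    unfolding x_def y_def z_J
    using trace_form_vertex_minus_projections[OF inj, of v J w "case_prod aa" a] src_e w_ghost
    by (simp add: J_def)
  ultimately show ?thesis
    by (simp add: R_ge_def)
qed

end

theorem lemma3p3:
  fixes src rng :: "'e \<Rightarrow> 'v"
    and invK :: "'k::field \<Rightarrow> 'k"
    and sm :: "'k \<Rightarrow> 'r::ring \<Rightarrow> 'r"
    and st :: "'r \<Rightarrow> 'r"
    and t :: "('v, 'e, 'k) fa \<Rightarrow> 'r"
  assumes invK: "field_involution invK"
    and R: "inv_K_algebra invK sm st"
    and tr: "LPA_trace src rng t"
    and lin: "K_linear sm t"
    and can: "canonical src rng t"
  shows
    "(\<forall>p q (m::nat) (r :: nat \<Rightarrow> 'v \<times> 'e list) (a :: nat \<Rightarrow> 'k).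
        is_path src rng p \<and> is_path src rng q \<and> p_rng rng p = p_rng rng q \<and>
        (\<forall>i<m. is_path src rng (r i) \<and> p_src (r i) = p_rng rng p) \<longrightarrow>
        (let x = fa_sum (\<lambda>i. fa_smult (a i) (fa_word (pw p @ pw (r i) @ wstar (pw (r i)) @ wstar (pw q)))) {..<m};
             y = fa_sum (\<lambda>i. fa_smult (a i) (fa_word (pw (r i) @ wstar (pw (r i))))) {..<m}
         in t (fa_mult x (fa_star invK x)) = t (fa_mult y (fa_star invK y))))
     \<and>
     (condP src rng st t \<longrightarrow>
      (\<forall>v (m::nat) (e :: nat \<Rightarrow> 'e) (mi :: nat \<Rightarrow> nat) (r :: nat \<Rightarrow> nat \<Rightarrow> 'v \<times> 'e list)
          (aa :: nat \<Rightarrow> nat \<Rightarrow> 'k) (a :: 'k).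
        inj_on e {..<m} \<and> (\<forall>i<m. src (e i) = v) \<and>
        (\<forall>i<m. \<forall>j<mi i. is_path src rng (r i j) \<and> p_src (r i j) = rng (e i)) \<longrightarrow>
        (let z = fa_sum (\<lambda>i. fa_sum (\<lambda>j. fa_smult (aa i j)
                    (fa_word ([Ed (e i)] @ pw (r i j) @ wstar (pw (r i j)) @ [Gh (e i)]))) {..<mi i}) {..<m};
             x = fa_add z (fa_smult a (fa_word [V v]));
             y = fa_add z (fa_smult a (fa_sum (\<lambda>i. fa_word [Ed (e i), Gh (e i)]) {..<m}))
         in R_ge st (t (fa_mult x (fa_star invK x))) (t (fa_mult y (fa_star invK y))))))"
proof -
  interpret linear_LPA_trace src rng invK sm st t
    using invK R tr lin by unfold_locales
  show ?thesis
    unfolding Let_def trace_form_def[symmetric]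
    using trace_form_conjugate_by_paths trace_form_vertex_ge_projections by blast
qed

end
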